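(* Let $S$ be a regular semigroup with zero $0$, and let $e,f$ be idempotents of $S$. Then $ef=0$ if and only if $M(e,f)=\{0\}$.
   Context: A semigroup is regular if for every $x$ there is $y$ with $xyx=x$. For idempotents $e,f$ of $S$, $M(e,f)=\{g \text{ idempotent in } S: ge=g \text{ and } fg=g\}$. *)

theory Defs
  imports Main
begin

definition is_zero :: "'a::semigroup_mult \<Rightarrow> bool" where
  "is_zero z \<longleftrightarrow> (\<forall>x. z * x = z \<and> x * z = z)"

definition regular_semigroup :: "'a::semigroup_mult itself \<Rightarrow> bool" where
  "regular_semigroup _ \<longleftrightarrow> (\<forall>x::'a. \<exists>y. x * y * x = x)"

definition idem :: "'a::semigroup_mult \<Rightarrow> bool" where
  "idem e \<longleftrightarrow> e * e = e"

definition sandwich_set :: "'a::semigroup_mult \<Rightarrow> 'a \<Rightarrow> 'a set" ("M'(_,_')") where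
  "sandwich_set e f = {g. idem g \<and> g * e = g \<and> f * g = g}"

end

theory Submission
  imports Defs
begin

(* Every g in M(e,f) satisfies g = g (ef) g, so ef = 0 forces M(e,f) = {0}.
   Conversely, if y is an inverse of ef (which exists by regularity), then
   f y e lies in M(e,f) and e (f y e) f = ef, so M(e,f) = {0} forces ef = 0. *)

lemma zero_mem_sandwich_set:
  assumes "is_zero z"
  shows "z \<in> sandwich_set e f"
  using assms unfolding sandwich_set_def idem_def is_zero_def by simp

lemma sandwich_set_mem_eq:
  assumes "g \<in> sandwich_set e f"
  shows "g = g * (e * f) * g"
proof -
  have "g * g = g" "g * e = g" "f * g = g"
    using assms unfolding sandwich_set_def idem_def by auto
  then have "g = (g * e) * (f * g)" by simp
  also have "\<dots> = g * (e * f) * g" by (simp add: mult.assoc)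
  finally show ?thesis .
qed

lemma inverse_of_inner_inverse:
  fixes x y :: "'a::semigroup_mult"
  assumes "x * y * x = x"
  shows "x * (y * x * y) * x = x" and "y * x * y * x * (y * x * y) = y * x * y"
  using assms by (metis mult.assoc)+

lemma sandwich_set_mem_of_inverse:
  assumes "idem e" and "idem f" and "y * (e * f) * y = y"
  shows "f * y * e \<in> sandwich_set e f"
proof -
  have "f * y * e * (f * y * e) = f * (y * (e * f) * y) * e"
    by (simp add: mult.assoc)
  moreover have "f * y * e * e = f * y * (e * e)" "f * (f * y * e) = f * f * y * e"
    by (simp_all add: mult.assoc)
  ultimately show ?thesis
    using assms unfolding sandwich_set_def idem_def by simp
qed

theorem lemma2p2:
  fixes z e f :: "'a::semigroup_mult"
  assumes "regular_semigroup TYPE('a)"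
    and "is_zero z"
    and "idem e" and "idem f"
  shows "e * f = z \<longleftrightarrow> sandwich_set e f = {z}"
proof
  assume "e * f = z"
  then have "g = z" if "g \<in> sandwich_set e f" for g
    using sandwich_set_mem_eq [OF that] \<open>is_zero z\<close> unfolding is_zero_def by simp
  then show "sandwich_set e f = {z}"
    using zero_mem_sandwich_set [OF \<open>is_zero z\<close>] by blast
next
  assume M: "sandwich_set e f = {z}"
  obtain y where "e * f * y * (e * f) = e * f"
    using assms(1) unfolding regular_semigroup_def by blast
  then obtain y' where inv: "e * f * y' * (e * f) = e * f" "y' * (e * f) * y' = y'"
    using inverse_of_inner_inverse by blast
  have "f * y' * e = z"
    using sandwich_set_mem_of_inverse [OF assms(3,4) inv(2)] M by blast
  have "e * f = e * f * y' * (e * f)" using inv(1) by simp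
  also have "\<dots> = e * (f * y' * e) * f"
    by (simp add: mult.assoc)
  also have "\<dots> = z"
    using \<open>f * y' * e = z\<close> \<open>is_zero z\<close> unfolding is_zero_def by simp
  finally show "e * f = z" .
qed

end
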